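(* For $p\in(0,1]$ let $\varphi(p)=\big(1-(3-2\sqrt2)p\big)^{\frac2p}\big(1-\frac p2\big)^{\frac2p-1}$. Then $\varphi$ is monotonically increasing on $(0,1]$. *)

theory Defs
  imports Complex_Main
begin

definition phi :: "real \<Rightarrow> real" where
  "phi p = (1 - (3 - 2 * sqrt 2) * p) powr (2 / p) * (1 - p / 2) powr (2 / p - 1)"

end

theory Submission
  imports Defs
begin

text \<open>Write \<open>\<phi> = exp L\<close> with \<open>L p = (2/p) ln (1 - c p) + (2/p - 1) ln (1 - p/2)\<close>.
  Then \<open>L' p = 2 N p / p\<^sup>2\<close>, where \<open>N 0 = 0\<close> and
  \<open>N' p = p (1/(2(2 - p)) - c\<^sup>2/(1 - c p)\<^sup>2)\<close>. The bracket is nonnegative on \<open>[0,1]\<close> because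
  \<open>2c\<^sup>2(2 - p) \<le> 4c\<^sup>2 \<le> 4c = (1 - c)\<^sup>2 \<le> (1 - c p)\<^sup>2\<close> for \<open>c = 3 - 2\<surd>2\<close>; so \<open>N \<ge> 0\<close> and
  \<open>L\<close> increases. The argument works for every \<open>c \<in> [0, 3 - 2\<surd>2]\<close>.\<close>

definition phi_gen :: "real \<Rightarrow> real \<Rightarrow> real" where
  "phi_gen c p = (1 - c * p) powr (2 / p) * (1 - p / 2) powr (2 / p - 1)"

locale phi_parameter =
  fixes c :: real
  assumes c_nonneg: "0 \<le> c" and c_le_1: "c \<le> 1" and four_c_le: "4 * c \<le> (1 - c)\<^sup>2"
begin

lemma c_less_1: "c < 1"
  using c_le_1 four_c_le by (cases "c = 1") auto

lemma one_minus_c_mult_pos: "0 \<le> p \<Longrightarrow> p \<le> 1 \<Longrightarrow> 0 < 1 - c * p"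
  using c_less_1 c_nonneg mult_left_le[of p c] by linarith

lemma c_square_bound:
  assumes "0 \<le> p" "p \<le> 1"
  shows "c\<^sup>2 * (2 * (2 - p)) \<le> (1 - c * p)\<^sup>2"
proof -
  have "c\<^sup>2 * (2 * (2 - p)) \<le> 4 * c\<^sup>2"
    using assms mult_left_mono[of "2 * (2 - p)" 4 "c\<^sup>2"] by simp
  also have "\<dots> \<le> 4 * c"
    using c_nonneg c_le_1 by (simp add: power2_eq_square mult_left_le)
  also have "\<dots> \<le> (1 - c)\<^sup>2"
    by (fact four_c_le)
  also have "\<dots> \<le> (1 - c * p)\<^sup>2"
    using assms c_nonneg c_le_1 by (intro power_mono) (auto simp: mult_left_le)
  finally show ?thesis .
qed

definition log_phi :: "real \<Rightarrow> real" where
  "log_phi p = 2 / p * ln (1 - c * p) + (2 / p - 1) * ln (1 - p / 2)"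

definition log_phi_numer :: "real \<Rightarrow> real" where
  "log_phi_numer p = - ln (1 - c * p) - ln (1 - p / 2) - c * p / (1 - c * p) - p / 2"

lemma log_phi_numer_has_derivative:
  assumes "0 \<le> p" "p \<le> 1"
  shows "(log_phi_numer has_real_derivative p * (1 / (2 * (2 - p)) - c\<^sup>2 / (1 - c * p)\<^sup>2)) (at p)"
proof -
  have q: "0 < 1 - c * p" and r: "0 < 2 - p"
    using one_minus_c_mult_pos assms by auto
  have "(log_phi_numer has_real_derivative
      c / (1 - c * p) + 1 / (2 - p) - c / (1 - c * p)\<^sup>2 - 1 / 2) (at p)"
    unfolding log_phi_numer_def[abs_def]
    by (rule DERIV_cong, use q r in \<open>auto intro!: derivative_eq_intros\<close>)
      (use q r in \<open>simp add: divide_simps power2_eq_square, simp add: algebra_simps\<close>)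
  moreover have "c / (1 - c * p) + 1 / (2 - p) - c / (1 - c * p)\<^sup>2 - 1 / 2
      = p * (1 / (2 * (2 - p)) - c\<^sup>2 / (1 - c * p)\<^sup>2)"
    using q r by (simp add: divide_simps power2_eq_square) algebra
  ultimately show ?thesis by simp
qed

lemma log_phi_numer_nonneg:
  assumes "0 \<le> p" "p \<le> 1"
  shows "0 \<le> log_phi_numer p"
proof -
  have "log_phi_numer 0 \<le> log_phi_numer p"
  proof (rule DERIV_nonneg_imp_nondecreasing[OF assms(1)])
    fix x assume x: "0 \<le> x" "x \<le> p"
    then have "0 < 1 - c * x" "0 < 2 - x"
      using assms one_minus_c_mult_pos by auto
    with c_square_bound[of x] x assms have "c\<^sup>2 / (1 - c * x)\<^sup>2 \<le> 1 / (2 * (2 - x))"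
      by (simp add: field_simps)
    with x have "0 \<le> x * (1 / (2 * (2 - x)) - c\<^sup>2 / (1 - c * x)\<^sup>2)"
      by simp
    with log_phi_numer_has_derivative[of x] x assms
    show "\<exists>y. (log_phi_numer has_real_derivative y) (at x) \<and> 0 \<le> y"
      by auto
  qed
  then show ?thesis
    by (simp add: log_phi_numer_def)
qed

lemma log_phi_has_derivative:
  assumes "0 < p" "p \<le> 1"
  shows "(log_phi has_real_derivative 2 * log_phi_numer p / p\<^sup>2) (at p)"
proof -
  have q: "0 < 1 - c * p" and r: "0 < 2 - p"
    using one_minus_c_mult_pos assms by auto
  have "(log_phi has_real_derivative
      - 2 / p\<^sup>2 * ln (1 - c * p) - 2 * c / (p * (1 - c * p))
      - 2 / p\<^sup>2 * ln (1 - p / 2) - 1 / p) (at p)"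
    unfolding log_phi_def[abs_def]
    by (rule DERIV_cong, use assms q r in \<open>auto intro!: derivative_eq_intros\<close>)
      (use assms q r in \<open>simp add: divide_simps power2_eq_square, simp add: algebra_simps\<close>)
  moreover have "- 2 / p\<^sup>2 * ln (1 - c * p) - 2 * c / (p * (1 - c * p))
      - 2 / p\<^sup>2 * ln (1 - p / 2) - 1 / p = 2 * log_phi_numer p / p\<^sup>2"
    unfolding log_phi_numer_def using assms q
    by (simp add: divide_simps power2_eq_square) (simp add: algebra_simps)
  ultimately show ?thesis
    by simp
qed

lemma mono_on_log_phi: "mono_on {0<..1} log_phi"
proof (rule mono_onI)
  fix x y :: real assume xy: "x \<in> {0<..1}" "y \<in> {0<..1}" "x \<le> y"
  show "log_phi x \<le> log_phi y"
  proof (rule DERIV_nonneg_imp_nondecreasing[OF \<open>x \<le> y\<close>])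
    fix t assume "x \<le> t" "t \<le> y"
    with xy have t: "0 < t" "t \<le> 1"
      by auto
    show "\<exists>d. (log_phi has_real_derivative d) (at t) \<and> 0 \<le> d"
      using log_phi_has_derivative[OF t] log_phi_numer_nonneg[of t] t by auto
  qed
qed

lemma phi_gen_eq_exp_log_phi:
  assumes "0 < p" "p \<le> 1"
  shows "phi_gen c p = exp (log_phi p)"
proof -
  have "0 < 1 - c * p" "0 < 1 - p / 2"
    using one_minus_c_mult_pos assms by auto
  then show ?thesis
    by (simp add: phi_gen_def log_phi_def powr_def exp_add)
qed

lemma mono_on_phi_gen: "mono_on {0<..1} (phi_gen c)"
  using mono_on_log_phi
  by (auto simp: mono_on_def phi_gen_eq_exp_log_phi)

end

lemma phi_parameter_3_minus_2_sqrt_2: "phi_parameter (3 - 2 * sqrt 2)"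
proof
  have "sqrt 2 < (3 / 2 :: real)"
    by (rule real_less_lsqrt) (auto simp: power2_eq_square)
  then show "0 \<le> 3 - 2 * sqrt (2::real)"
    by simp
  show "3 - 2 * sqrt 2 \<le> (1::real)"
    by simp
  show "4 * (3 - 2 * sqrt 2) \<le> (1 - (3 - 2 * sqrt (2::real)))\<^sup>2"
    by (simp add: power2_eq_square algebra_simps)
qed

theorem lemma11:
  shows "mono_on {0<..1} phi"
proof -
  have "phi = phi_gen (3 - 2 * sqrt 2)"
    by (simp add: fun_eq_iff phi_def phi_gen_def)
  then show ?thesis
    using phi_parameter.mono_on_phi_gen[OF phi_parameter_3_minus_2_sqrt_2] by simp
qed

end
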